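(* For any $\lambda>0$ and any integer $n\ge 4\lambda^{-2}+1$, $$P\{\chi^2_{n+1}<(n+1)(1-\lambda)\}\le P\{\chi^2_n\le n(1-\lambda)\},$$ where $\chi^2_k$ denotes a chi-square random variable with $k$ degrees of freedom. *)

theory Defs
  imports "HOL-Probability.Probability"
begin

definition chi_square_density :: "nat \<Rightarrow> real \<Rightarrow> real" where
  "chi_square_density k x =
     (if x > 0 then x powr (real k / 2 - 1) * exp (- x / 2) / (2 powr (real k / 2) * Gamma (real k / 2))
      else 0)"

definition chi_square :: "nat \<Rightarrow> real measure" where
  "chi_square k = density lborel (\<lambda>x. ennreal (chi_square_density k x))"

end

theory Submission
  imports Defs
begin

text \<open>Substituting \<open>x = a y\<close> with \<open>a = (n + 1) / n\<close> turns the threshold \<open>(n + 1)(1 - \<lambda>)\<close>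
  into \<open>n (1 - \<lambda>)\<close>, so it suffices to compare the densities pointwise:
  \<open>a f\<^sub>n\<^sub>+\<^sub>1(a y) \<le> f\<^sub>n(y)\<close> for \<open>0 < y \<le> n (1 - \<lambda>)\<close>. On logarithms the difference is
  bounded using that \<open>ln t - t / n\<close> increases for \<open>t \<le> n\<close>, the log-convexity of \<open>\<Gamma>\<close>
  (which bounds \<open>\<Gamma>(n/2) / \<Gamma>((n+1)/2)\<close>), \<open>ln (1 + 1/n) \<le> 1/n\<close> and
  \<open>ln (1 - \<lambda>) \<le> -\<lambda> - \<lambda>\<^sup>2/2\<close>; what remains is \<open>1/n - \<lambda>\<^sup>2/4\<close>, which is nonpositive
  precisely because \<open>n \<lambda>\<^sup>2 \<ge> 4\<close>.\<close>

lemma Gamma_plus1_real: "(x::real) > 0 \<Longrightarrow> Gamma (x + 1) = x * Gamma x"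
  by (rule Gamma_plus1) (auto elim!: nonpos_Ints_cases)

lemma Gamma_real_nonzero: "(x::real) > 0 \<Longrightarrow> Gamma x \<noteq> 0"
  using Gamma_real_pos[of x] by linarith

lemma ln_Gamma_half_step:
  fixes x :: real assumes x: "x > 0"
  shows "ln (Gamma x) - ln (Gamma (x + 1/2)) \<le> ln (x + 1/2) / 2 - ln x"
proof -
  have "(ln \<circ> Gamma) ((1 - 1/2) *\<^sub>R (x + 1/2) + (1/2) *\<^sub>R (x + 3/2))
        \<le> (1 - 1/2) * (ln \<circ> Gamma) (x + 1/2) + (1/2) * (ln \<circ> Gamma) (x + 3/2)"
    by (rule convex_onD[OF log_convex_Gamma_real]) (use x in auto)
  moreover have "(1 - 1/2) *\<^sub>R (x + 1/2) + (1/2) *\<^sub>R (x + 3/2) = x + 1"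
    by (simp add: field_simps)
  moreover have "Gamma (x + 1) = x * Gamma x"
    using Gamma_plus1_real x by blast
  moreover have "Gamma (x + 3/2) = (x + 1/2) * Gamma (x + 1/2)"
    using Gamma_plus1_real[of "x + 1/2"] x by (simp add: add.assoc)
  moreover have "Gamma x \<noteq> 0" "Gamma (x + 1/2) > 0"
    using x Gamma_real_nonzero[of x] by simp_all
  ultimately have "ln x + ln (Gamma x)
      \<le> ln (Gamma (x + 1/2)) / 2 + (ln (x + 1/2) + ln (Gamma (x + 1/2))) / 2"
    using x by (simp add: ln_mult)
  then show ?thesis by (simp add: field_simps)
qed

lemma ln_one_minus_le:
  fixes l :: real assumes "0 \<le> l" "l < 1"
  shows "ln (1 - l) \<le> - l - l\<^sup>2 / 2"
proof -
  let ?f = "\<lambda>t::real. ln (1 - t) + t + t\<^sup>2 / 2"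
  have "?f l \<le> ?f 0"
  proof (rule DERIV_nonpos_imp_decreasing_open[of 0 l ?f])
    fix t assume t: "0 < t" "t < l"
    have "DERIV ?f t :> - 1 / (1 - t) + 1 + t"
      using t assms by (auto intro!: derivative_eq_intros simp: field_simps)
    moreover have "- 1 / (1 - t) + 1 + t \<le> 0"
      using t assms by (simp add: field_simps power2_eq_square)
    ultimately show "\<exists>y. DERIV ?f t :> y \<and> y \<le> 0" by blast
  qed (use assms in \<open>auto intro!: continuous_intros\<close>)
  then show ?thesis by simp
qed

lemma ln_minus_div_le_mono:
  fixes y m N :: real assumes "0 < y" "y \<le> m" "m \<le> N"
  shows "ln y - y / N \<le> ln m - m / N"
proof -
  have "ln (y / m) \<le> y / m - 1"
    using assms by (intro ln_le_minus_one) simp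
  also have "\<dots> \<le> m / N * (y / m - 1)"
    using assms mult_right_mono_neg[of "m / N" 1 "y / m - 1"] by simp
  also have "\<dots> = y / N - m / N"
    using assms by (simp add: field_simps)
  finally show ?thesis
    using assms by (simp add: ln_div)
qed

lemma chi_square_density_measurable [measurable]: "chi_square_density k \<in> borel_measurable borel"
  unfolding chi_square_density_def by measurable

lemma chi_square_density_pos: "k > 0 \<Longrightarrow> x > 0 \<Longrightarrow> chi_square_density k x > 0"
  unfolding chi_square_density_def by simp

lemma ln_chi_square_density:
  assumes "k > 0" "x > 0"
  shows "ln (chi_square_density k x)
           = (real k / 2 - 1) * ln x - x / 2 - real k / 2 * ln 2 - ln (Gamma (real k / 2))"
  using assms Gamma_real_nonzero[of "real k / 2"]
  by (simp add: chi_square_density_def ln_mult ln_div)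

lemma prob_space_chi_square:
  assumes "k > 0" shows "prob_space (chi_square k)"
proof (rule prob_spaceI)
  let ?s = "real k / 2"
  have "((\<lambda>t. t powr (?s - 1) / exp t / Gamma ?s) has_integral 1) {0..}"
    using has_integral_divide[OF Gamma_integral_real, of ?s "Gamma ?s"] assms
      Gamma_real_nonzero[of ?s] by simp
  then have Gamma_density:
    "(\<integral>\<^sup>+t. ennreal (t powr (?s - 1) / exp t / Gamma ?s) * indicator {0..} t \<partial>lborel) = 1"
    using assms Gamma_real_pos[of ?s] by (subst nn_integral_has_integral_lebesgue') auto
  have "ennreal (2 * chi_square_density k (2 * t))
          = ennreal (t powr (?s - 1) / exp t / Gamma ?s) * indicator {0..} t" for t
  proof (cases "t > 0")
    case True
    have "(2 * t) powr (?s - 1) = 2 powr ?s / 2 * t powr (?s - 1)"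
      using True by (simp add: powr_mult powr_diff)
    then show ?thesis
      using True by (simp add: chi_square_density_def exp_minus field_simps)
  qed (auto simp: chi_square_density_def indicator_def)
  then have "(\<integral>\<^sup>+t. ennreal (2 * chi_square_density k (2 * t)) \<partial>lborel) = 1"
    using Gamma_density by simp
  then have "(\<integral>\<^sup>+x. ennreal (chi_square_density k x) \<partial>lborel) = 1"
    by (subst nn_integral_real_affine[where c = 2 and t = 0]) (auto simp: ennreal_mult' nn_integral_cmult)
  then show "emeasure (chi_square k) (space (chi_square k)) = 1"
    by (simp add: chi_square_def emeasure_density)
qed

lemma ln_scaled_chi_square_density_ratio:
  assumes n: "n > 0" and y: "y > 0"
  defines "a \<equiv> (real n + 1) / real n"
  shows "ln (a * chi_square_density (n + 1) (a * y)) - ln (chi_square_density n y)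
           = (real n + 1) / 2 * ln a + (ln y - y / real n) / 2 - ln 2 / 2
             + (ln (Gamma (real n / 2)) - ln (Gamma ((real n + 1) / 2)))"
proof -
  have a: "a > 0" "a * y = y + y / real n"
    using n by (simp_all add: a_def field_simps)
  have L: "ln (a * chi_square_density (n + 1) (a * y))
          = ln a + ((real n + 1) / 2 - 1) * (ln a + ln y) - a * y / 2
            - (real n + 1) / 2 * ln 2 - ln (Gamma ((real n + 1) / 2))"
    using a(1) y
    by (simp add: ln_mult_pos chi_square_density_pos ln_chi_square_density add.commute)
  have R: "ln (chi_square_density n y)
          = (real n / 2 - 1) * ln y - y / 2 - real n / 2 * ln 2 - ln (Gamma (real n / 2))"
    using n y by (rule ln_chi_square_density)
  show ?thesis
    unfolding L R using n by (simp add: a(2) field_simps)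
qed

lemma scaled_chi_square_density_succ_le:
  fixes lam y :: real and n :: nat
  assumes lam: "lam > 0" and n: "real n \<ge> 4 / lam\<^sup>2 + 1"
    and y: "0 < y" "y \<le> real n * (1 - lam)"
  defines "a \<equiv> (real n + 1) / real n"
  shows "a * chi_square_density (n + 1) (a * y) \<le> chi_square_density n y"
proof -
  define N where "N = real n"
  define c where "c = 1 - lam"
  have "0 < real n * c"
    using y by (simp add: c_def)
  then have c: "0 < c" "c < 1"
    using lam by (auto simp: c_def zero_less_mult_iff)
  have "4 / lam\<^sup>2 > 0"
    using lam by simp
  then have N: "N \<ge> 1" and "4 / lam\<^sup>2 \<le> N"
    using n unfolding N_def by linarith+
  then have lam_N: "1 / N \<le> lam\<^sup>2 / 4"
    using lam by (simp add: field_simps)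
  have ln_a: "ln a = ln (N + 1) - ln N"
    using N by (simp add: a_def N_def ln_div)
  have ln_c: "ln c \<le> - lam - lam\<^sup>2 / 2"
    using ln_one_minus_le[of lam] lam c by (simp add: c_def)
  have ln_y: "ln y - y / N \<le> ln (N * c) - c"
    using ln_minus_div_le_mono[of y "N * c" N] N y c by (simp add: N_def c_def mult_left_le)
  have ln_Gamma: "ln (Gamma (N / 2)) - ln (Gamma ((N + 1) / 2)) \<le> ln ((N + 1) / 2) / 2 - ln (N / 2)"
    using ln_Gamma_half_step[of "N / 2"] N by (simp add: add_divide_distrib)
  have "ln (a * chi_square_density (n + 1) (a * y)) - ln (chi_square_density n y)
          = (N + 1) / 2 * ln a + (ln y - y / N) / 2 - ln 2 / 2
            + (ln (Gamma (N / 2)) - ln (Gamma ((N + 1) / 2)))"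
    using ln_scaled_chi_square_density_ratio[of n y] N y by (simp add: a_def N_def)
  also have "\<dots> \<le> (N + 1) / 2 * ln a + (ln (N * c) - c) / 2 - ln 2 / 2
                  + (ln ((N + 1) / 2) / 2 - ln (N / 2))"
    using ln_y ln_Gamma by argo
  also have "\<dots> = (N + 2) / 2 * ln a + (ln c - c) / 2"
    using N c by (simp add: ln_a ln_mult ln_div add_divide_distrib[symmetric] field_simps)
  also have "\<dots> \<le> (N + 2) / 2 * (1 / N) + (ln c - c) / 2"
    using ln_add_one_self_le_self[of "1 / N"] N
    by (intro add_right_mono mult_left_mono) (simp_all add: a_def N_def field_simps)
  also have "\<dots> = 1 / 2 + 1 / N + (ln c - c) / 2"
    using N by (simp add: field_simps)
  also have "\<dots> \<le> 0"
    using ln_c lam_N unfolding c_def by argo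
  finally have "ln (a * chi_square_density (n + 1) (a * y)) \<le> ln (chi_square_density n y)"
    by simp
  then show ?thesis
    using N y by (simp add: a_def N_def chi_square_density_pos)
qed

lemma emeasure_density_le_scaled:
  fixes f g :: "real \<Rightarrow> real" and a :: real
  assumes [measurable]: "f \<in> borel_measurable borel" "g \<in> borel_measurable borel"
    "A \<in> sets borel" "B \<in> sets borel"
    and a: "a > 0"
    and le: "\<And>y. a * y \<in> A \<Longrightarrow> f (a * y) > 0 \<Longrightarrow> y \<in> B \<and> a * f (a * y) \<le> g y"
  shows "emeasure (density lborel (\<lambda>x. ennreal (f x))) A
           \<le> emeasure (density lborel (\<lambda>x. ennreal (g x))) B"
proof -
  have "emeasure (density lborel (\<lambda>x. ennreal (f x))) A
          = (\<integral>\<^sup>+x. ennreal (f x) * indicator A x \<partial>lborel)"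
    by (simp add: emeasure_density)
  also have "\<dots> = ennreal a * (\<integral>\<^sup>+y. ennreal (f (a * y)) * indicator A (a * y) \<partial>lborel)"
    using a by (subst nn_integral_real_affine[where c = a and t = 0]) auto
  also have "\<dots> = (\<integral>\<^sup>+y. ennreal (a * f (a * y)) * indicator A (a * y) \<partial>lborel)"
    using a by (simp add: nn_integral_cmult ennreal_mult' mult.assoc)
  also have "\<dots> \<le> (\<integral>\<^sup>+y. ennreal (g y) * indicator B y \<partial>lborel)"
  proof (rule nn_integral_mono)
    fix y
    show "ennreal (a * f (a * y)) * indicator A (a * y) \<le> ennreal (g y) * indicator B y"
    proof (cases "a * y \<in> A \<and> f (a * y) > 0")
      case True
      then show ?thesis using le[of y] by (simp add: ennreal_leI)
    next
      case False
      then have "a * y \<notin> A \<or> a * f (a * y) \<le> 0"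
        using a by (auto simp: mult_nonneg_nonpos)
      then show ?thesis by (auto simp: ennreal_neg)
    qed
  qed
  also have "\<dots> = emeasure (density lborel (\<lambda>x. ennreal (g x))) B"
    by (simp add: emeasure_density)
  finally show ?thesis .
qed

theorem mainTheorem9:
  fixes lam :: real and n :: nat
  assumes "lam > 0"
    and "real n \<ge> 4 / lam\<^sup>2 + 1"
  shows "measure (chi_square (n + 1)) {x. x < real (n + 1) * (1 - lam)}
         \<le> measure (chi_square n) {x. x \<le> real n * (1 - lam)}"
proof -
  have "4 / lam\<^sup>2 > 0"
    using assms(1) by simp
  then have n: "n > 0"
    using assms(2) by linarith
  define a where "a = (real n + 1) / real n"
  have a: "a > 0" "real (n + 1) * (1 - lam) = a * (real n * (1 - lam))"
    using n by (simp_all add: a_def)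
  have le: "emeasure (chi_square (n + 1)) {x. x < real (n + 1) * (1 - lam)}
          \<le> emeasure (chi_square n) {x. x \<le> real n * (1 - lam)}"
    unfolding chi_square_def
  proof (rule emeasure_density_le_scaled[OF _ _ _ _ a(1)])
    fix y assume "a * y \<in> {x. x < real (n + 1) * (1 - lam)}"
      and "chi_square_density (n + 1) (a * y) > 0"
    then have "a * y < a * (real n * (1 - lam))" "a * y > 0"
      unfolding a(2) by (auto simp: chi_square_density_def split: if_splits)
    then have "y < real n * (1 - lam)" "y > 0"
      using a(1) by (simp_all add: zero_less_mult_iff)
    then show "y \<in> {x. x \<le> real n * (1 - lam)}
               \<and> a * chi_square_density (n + 1) (a * y) \<le> chi_square_density n y"
      using scaled_chi_square_density_succ_le[OF assms] by (simp add: a_def)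
  qed measurable
  interpret chi_square_n: prob_space "chi_square n"
    using n by (rule prob_space_chi_square)
  interpret chi_square_succ: prob_space "chi_square (n + 1)"
    by (rule prob_space_chi_square) simp
  show ?thesis
    using le unfolding chi_square_n.emeasure_eq_measure chi_square_succ.emeasure_eq_measure
    by simp
qed

end
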